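(* Let $X$ be a complete separable metric space, identified with its image under a fixed isometric embedding $\iota:X\to\ell_\infty(\mathbb{N})$. Let $(K_n)_{n\in\mathbb{N}}$ be a sequence of non-empty compact subsets of $X$ with $K_n\subset K_m$ for $n\le m$, let $M,L,\Delta>0$, and let $h_n:\ell_\infty(\mathbb{N})\to[0,\infty)$, $h_n(x)=\sum_{k=1}^n\min\{n\,d(x,K_k),1\}$. If $(P^i=(p^i_0,\dots,p^i_{n(i)}))_{i\in\mathbb{N}}$ is a sequence of discrete paths in $X$ with $\lim_{i\to\infty}\mathrm{Mesh}(P^i)=0$, $\mathrm{Len}(P^i)\le L$, $\mathrm{diam}(P^i)\ge\Delta$ and $\sum_{k=0}^{n(i)-1}h_i(p^i_k)d(p^i_k,p^i_{k+1})\le M$ for every $i$, then a subsequence of $(P^i)$ converges to a curve $\gamma:[0,1]\to X$.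
   Context: A discrete path is a sequence $P=(p_0,\dots,p_n)$ of points of $X$ with $n\ge1$; $\mathrm{Mesh}(P)=\max_{k\le n-1}d(p_k,p_{k+1})$, $\mathrm{diam}(P)=\max_{k,l}d(p_k,p_l)$, $\mathrm{Len}(P)=\sum_{k=0}^{n-1}d(p_k,p_{k+1})$. Distances $d(x,K)=\inf_{a\in K}d(x,a)$ are taken in $\ell_\infty(\mathbb{N})$. The linearly interpolating curve $\gamma_P:[0,1]\to\ell_\infty(\mathbb{N})$ is constant $p_0$ if $\mathrm{Len}(P)=0$; otherwise with $t_0=0$, $t_k=\sum_{i=0}^{k-1}d(p_i,p_{i+1})/\mathrm{Len}(P)$, $\gamma_P(t_k)=p_k$ and $\gamma_P$ is affine on each $[t_k,t_{k+1}]$ with $t_k<t_{k+1}$. A sequence of discrete paths $P^i$ converges to a curve $\gamma:[0,1]\to X$ if $\gamma_{P^i}\to\gamma$ uniformly and $\mathrm{Mesh}(P^i)\to0$. *)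

theory Defs
  imports "HOL-Analysis.Analysis"
begin

text \<open>The space l_infty(N) of bounded real sequences, realised as bounded
  (automatically continuous, N being discrete) functions nat to real.\<close>
type_synonym linf = "nat \<Rightarrow>\<^sub>C real"

text \<open>A discrete path P = (p_0,...,p_n) is given by a function p and its
  last index n (with n >= 1).\<close>

definition Mesh :: "(nat \<Rightarrow> linf) \<Rightarrow> nat \<Rightarrow> real" where
  "Mesh p n = Max {dist (p k) (p (Suc k)) | k. k < n}"

definition pdiam :: "(nat \<Rightarrow> linf) \<Rightarrow> nat \<Rightarrow> real" where
  "pdiam p n = Max {dist (p k) (p l) | k l. k \<le> n \<and> l \<le> n}"

definition Len :: "(nat \<Rightarrow> linf) \<Rightarrow> nat \<Rightarrow> real" where
  "Len p n = (\<Sum>k<n. dist (p k) (p (Suc k)))"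

definition tpar :: "(nat \<Rightarrow> linf) \<Rightarrow> nat \<Rightarrow> nat \<Rightarrow> real" where
  "tpar p n k = (\<Sum>i<k. dist (p i) (p (Suc i))) / Len p n"

definition gammaP :: "(nat \<Rightarrow> linf) \<Rightarrow> nat \<Rightarrow> real \<Rightarrow> linf" where
  "gammaP p n t =
     (if Len p n = 0 then p 0
      else (let k = (GREATEST k. k < n \<and> tpar p n k \<le> t \<and> tpar p n k < tpar p n (Suc k))
            in p k + ((t - tpar p n k) / (tpar p n (Suc k) - tpar p n k)) *\<^sub>R (p (Suc k) - p k)))"

definition hfun :: "(nat \<Rightarrow> linf set) \<Rightarrow> nat \<Rightarrow> linf \<Rightarrow> real" where
  "hfun K m x = (\<Sum>k=1..m. min (real m * infdist x (K k)) 1)"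

end

theory Submission
  imports Defs "HOL-Complex_Analysis.Great_Picard"
begin

(* The interpolating curves gammaP of the paths are L-Lipschitz, hence equicontinuous.
   Once i >= m, the weight h_i is at least m at every point farther than 1/i from K_m, so
   the edges of P^i starting that far from K_m have total length at most M/m.  As the
   paths have length at least Delta > M/m, some vertex is 1/i-close to K_m, and then every
   vertex is within 1/i + Mesh + M/m of K_m.  Hence the curves eventually stay uniformly
   close to the compact sets K_m, and a diagonal (Arzela-Ascoli) argument gives a uniformly
   Cauchy subsequence.  Its pointwise limits exist and lie in X because every point of a
   curve is Mesh-close to a vertex in X, and X is complete. *)

section \<open>An Arzela-Ascoli argument\<close>

lemma diagonal_subseq_eventually_constant:
  fixes col :: "nat \<Rightarrow> nat \<Rightarrow> 'c"
  assumes "\<And>m. finite (range (col m))"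
  obtains r :: "nat \<Rightarrow> nat"
  where "strict_mono r" "\<And>m. \<exists>N. \<forall>j\<ge>N. \<forall>j'\<ge>N. col m (r j) = col m (r j')"
proof -
  let ?const = "\<lambda>m (s :: nat \<Rightarrow> nat). \<exists>N. \<forall>j\<ge>N. \<forall>j'\<ge>N. col m (s j) = col m (s j')"
  obtain k where "strict_mono k" "\<And>m. ?const m (id \<circ> k)"
  proof (rule subsequence_diagonalization_lemma[of ?const id])
    fix m and r :: "nat \<Rightarrow> nat"
    have "finite (range (col m \<circ> r))"
      using assms[of m] by (rule finite_subset[rotated]) auto
    then obtain j0 where "infinite {j. col m (r j) = col m (r j0)}"
      using pigeonhole_infinite[of "UNIV :: nat set" "col m \<circ> r"] by auto
    then obtain q :: "nat \<Rightarrow> nat" where "strict_mono q" "\<And>j. col m (r (q j)) = col m (r j0)"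
      using infinite_enumerate by blast
    then show "\<exists>q. strict_mono q \<and> ?const m (r \<circ> q)"
      by auto
  next
    fix m and r k1 k2 :: "nat \<Rightarrow> nat" and N
    assume "?const m (r \<circ> k1)" and k2: "\<And>j. N \<le> j \<Longrightarrow> \<exists>j'. j \<le> j' \<and> k2 j = k1 j'"
    then obtain N1 where N1: "\<And>j j'. N1 \<le> j \<Longrightarrow> N1 \<le> j' \<Longrightarrow> col m (r (k1 j)) = col m (r (k1 j'))"
      by auto
    show "?const m (r \<circ> k2)"
    proof (intro exI allI impI)
      fix j j'
      assume "max N N1 \<le> j" "max N N1 \<le> j'"
      then show "col m ((r \<circ> k2) j) = col m ((r \<circ> k2) j')"
        using k2[of j] k2[of j'] N1 by fastforce
    qed
  qed blast
  then show thesis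
    using that[of k] by simp
qed

definition asymptotically_tight :: "'a set \<Rightarrow> (nat \<Rightarrow> 'a \<Rightarrow> 'b::metric_space) \<Rightarrow> bool" where
  "asymptotically_tight S f \<longleftrightarrow>
     (\<forall>e>0. \<exists>C. compact C \<and> (\<forall>\<^sub>F i in sequentially. \<forall>t\<in>S. \<exists>c\<in>C. dist (f i t) c < e))"

lemma asymptotically_tight_finite_net:
  assumes "asymptotically_tight S f" and "0 < e"
  obtains F I where "finite F" "\<And>i t. I \<le> i \<Longrightarrow> t \<in> S \<Longrightarrow> \<exists>c\<in>F. dist (f i t) c < e"
proof -
  have "0 < e / 2"
    using \<open>0 < e\<close> by simp
  then obtain C where "compact C"
    and near_C: "\<forall>\<^sub>F i in sequentially. \<forall>t\<in>S. \<exists>c\<in>C. dist (f i t) c < e / 2"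
    using assms(1) unfolding asymptotically_tight_def by blast
  obtain F where "finite F" and F: "C \<subseteq> (\<Union>c\<in>F. ball c (e / 2))"
    using seq_compact_imp_totally_bounded[OF compact_imp_seq_compact[OF \<open>compact C\<close>], rule_format,
        OF \<open>0 < e / 2\<close>]
    by blast
  obtain I where I: "\<And>i t. I \<le> i \<Longrightarrow> t \<in> S \<Longrightarrow> \<exists>c\<in>C. dist (f i t) c < e / 2"
    using near_C by (auto simp: eventually_sequentially)
  have "\<exists>c'\<in>F. dist (f i t) c' < e" if i: "I \<le> i" and t: "t \<in> S" for i t
  proof -
    obtain c where "c \<in> C" "dist (f i t) c < e / 2"
      using I[OF i t] by blast
    moreover obtain c' where "c' \<in> F" "dist c' c < e / 2"
      using F \<open>c \<in> C\<close> by auto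
    ultimately show ?thesis
      using dist_triangle_less_add[of "f i t" c "e / 2" c' "e / 2"] by auto
  qed
  with \<open>finite F\<close> that show thesis
    by blast
qed

definition close_colouring :: "'a set \<Rightarrow> (nat \<Rightarrow> 'a \<Rightarrow> 'b::metric_space) \<Rightarrow> real \<Rightarrow> (nat \<Rightarrow> 'c) \<Rightarrow> bool"
  where "close_colouring S f e col \<longleftrightarrow> finite (range col) \<and>
    (\<exists>I. \<forall>i\<ge>I. \<forall>i'\<ge>I. col i = col i' \<longrightarrow> (\<forall>t\<in>S. dist (f i t) (f i' t) < e))"

lemma exists_close_colouring:
  fixes f :: "nat \<Rightarrow> 'a::metric_space \<Rightarrow> 'b::metric_space"
  assumes S: "compact S" and lip: "\<And>i. L-lipschitz_on S (f i)"
    and tight: "asymptotically_tight S f" and "0 < e"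
  shows "\<exists>col :: nat \<Rightarrow> 'a \<Rightarrow> 'b set. close_colouring S f e col"
proof -
  have "0 < e / 4"
    using \<open>0 < e\<close> by simp
  obtain F I where "finite F" and I: "\<And>i t. I \<le> i \<Longrightarrow> t \<in> S \<Longrightarrow> \<exists>c\<in>F. dist (f i t) c < e / 4"
    by (rule asymptotically_tight_finite_net[OF tight \<open>0 < e / 4\<close>]) blast
  define \<delta> where "\<delta> = e / 4 / (L + 1)"
  have "0 \<le> L"
    using lip lipschitz_on_nonneg by blast
  then have "0 < \<delta>"
    using \<open>0 < e\<close> by (simp add: \<delta>_def)
  have "L * \<delta> < e / 4"
    unfolding \<delta>_def times_divide_eq_right
    using \<open>0 \<le> L\<close> \<open>0 < e\<close> by (simp add: pos_divide_less_eq algebra_simps)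
  obtain T where "finite T" "T \<subseteq> S" and T: "S \<subseteq> (\<Union>x\<in>T. ball x \<delta>)"
    using seq_compact_imp_totally_bounded[OF compact_imp_seq_compact[OF S], rule_format, OF \<open>0 < \<delta>\<close>]
    by blast
  \<comment> \<open>Equal colours provide, at each point of the net \<open>T\<close>, a common centre close to both maps.\<close>
  define col where "col i = (\<lambda>x\<in>T. {c\<in>F. dist (f i x) c < e / 4})" for i
  have "range col \<subseteq> Pi\<^sub>E T (\<lambda>_. Pow F)"
    by (auto simp: col_def)
  then have "finite (range col)"
    by (rule finite_subset) (simp add: finite_PiE \<open>finite T\<close> \<open>finite F\<close>)
  moreover have "dist (f i t) (f i' t) < e"
    if "I \<le> i" "I \<le> i'" "col i = col i'" "t \<in> S" for i i' t
  proof -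
    obtain x where "x \<in> T" "dist t x < \<delta>"
      using T \<open>t \<in> S\<close> by (force simp: dist_commute)
    then have "x \<in> S"
      using \<open>T \<subseteq> S\<close> by blast
    obtain c where "c \<in> F" "dist (f i x) c < e / 4"
      using I[OF \<open>I \<le> i\<close> \<open>x \<in> S\<close>] by blast
    then have "c \<in> col i x"
      using \<open>x \<in> T\<close> by (simp add: col_def)
    then have "c \<in> col i' x"
      using \<open>col i = col i'\<close> by simp
    then have "dist (f i' x) c < e / 4"
      using \<open>x \<in> T\<close> by (simp add: col_def)
    have lipschitz_at_x: "dist (f j t) (f j x) < e / 4" for j
    proof -
      have "dist (f j t) (f j x) \<le> L * dist t x"
        using lip \<open>t \<in> S\<close> \<open>x \<in> S\<close> by (rule lipschitz_onD)
      also have "\<dots> \<le> L * \<delta>"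
        using \<open>0 \<le> L\<close> \<open>dist t x < \<delta>\<close> by (intro mult_left_mono) auto
      finally show ?thesis
        using \<open>L * \<delta> < e / 4\<close> by linarith
    qed
    show ?thesis
      using lipschitz_at_x[of i] lipschitz_at_x[of i'] \<open>dist (f i x) c < e / 4\<close> \<open>dist (f i' x) c < e / 4\<close>
        dist_triangle[of "f i t" "f i' t" "f i x"] dist_triangle[of "f i x" "f i' t" c]
        dist_triangle[of c "f i' t" "f i' x"] dist_commute[of c "f i' x"]
        dist_commute[of "f i' x" "f i' t"]
      by linarith
  qed
  ultimately show ?thesis
    unfolding close_colouring_def by blast
qed

lemma equi_lipschitz_tight_uniformly_Cauchy_subseq:
  fixes f :: "nat \<Rightarrow> 'a::metric_space \<Rightarrow> 'b::metric_space"
  assumes "compact S" and "\<And>i. L-lipschitz_on S (f i)" and "asymptotically_tight S f"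
  obtains r :: "nat \<Rightarrow> nat" where "strict_mono r" "uniformly_Cauchy_on S (\<lambda>j. f (r j))"
proof -
  have "\<forall>m. \<exists>col :: nat \<Rightarrow> 'a \<Rightarrow> 'b set. close_colouring S f (1 / Suc m) col"
    using exists_close_colouring[OF assms] by simp
  from choice[OF this] obtain col :: "nat \<Rightarrow> nat \<Rightarrow> 'a \<Rightarrow> 'b set"
    where col: "\<forall>m. close_colouring S f (1 / Suc m) (col m)"
    by (rule exE)
  then have "finite (range (col m))" for m
    by (simp add: close_colouring_def)
  then obtain r :: "nat \<Rightarrow> nat"
    where r: "strict_mono r" and const: "\<And>m. \<exists>N. \<forall>j\<ge>N. \<forall>j'\<ge>N. col m (r j) = col m (r j')"
    using diagonal_subseq_eventually_constant[of col] by blast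
  have "uniformly_Cauchy_on S (\<lambda>j. f (r j))"
  proof (rule uniformly_Cauchy_onI)
    fix e :: real
    assume "0 < e"
    then obtain m where "1 / Suc m < e"
      using nat_approx_posE by blast
    obtain N where N: "\<And>j j'. N \<le> j \<Longrightarrow> N \<le> j' \<Longrightarrow> col m (r j) = col m (r j')"
      using const[of m] by blast
    obtain I where I: "\<forall>i\<ge>I. \<forall>i'\<ge>I. col m i = col m i' \<longrightarrow> (\<forall>t\<in>S. dist (f i t) (f i' t) < 1 / Suc m)"
      using col unfolding close_colouring_def by blast
    have "dist (f (r j) t) (f (r j') t) < e" if "t \<in> S" "max N I \<le> j" "max N I \<le> j'" for t j j'
    proof -
      have "I \<le> r j" "I \<le> r j'"
        using that seq_suble[OF r, of j] seq_suble[OF r, of j'] by linarith+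
      then have "dist (f (r j) t) (f (r j') t) < 1 / Suc m"
        using I N[of j j'] that by auto
      then show ?thesis
        using \<open>1 / Suc m < e\<close> by linarith
    qed
    then show "\<exists>M. \<forall>t\<in>S. \<forall>j\<ge>M. \<forall>j'\<ge>M. dist (f (r j) t) (f (r j') t) < e"
      by blast
  qed
  with r that show thesis
    by blast
qed

section \<open>Discrete paths and their interpolating curves\<close>

lemma exists_increasing_step:
  fixes T :: "nat \<Rightarrow> 'a::linorder"
  assumes "a \<le> b" "T a < T b"
  shows "\<exists>j. a \<le> j \<and> j < b \<and> T j \<le> T a \<and> T j < T (Suc j)"
  using assms
proof (induction b)
  case 0
  then show ?case by simp
next
  case (Suc b)
  then have "a \<le> b" by (metis le_Suc_eq less_irrefl)
  show ?case
  proof (cases "T a < T b")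
    case True
    then show ?thesis using Suc.IH \<open>a \<le> b\<close> less_SucI by blast
  next
    case False
    then show ?thesis using Suc.prems(2) \<open>a \<le> b\<close> by (intro exI[of _ b]) auto
  qed
qed

lemma dist_le_sum_edges:
  "a \<le> b \<Longrightarrow> dist (p a) (p b) \<le> (\<Sum>l=a..<b. dist (p l) (p (Suc l)))"
proof (induction b rule: dec_induct)
  case (step b)
  then show ?case
    using dist_triangle[of "p a" "p (Suc b)" "p b"] by simp
qed simp

lemma Len_nonneg: "0 \<le> Len p n"
  by (simp add: Len_def sum_nonneg)

lemma tpar_0 [simp]: "tpar p n 0 = 0"
  by (simp add: tpar_def)

lemma tpar_last: "Len p n > 0 \<Longrightarrow> tpar p n n = 1"
  by (simp add: tpar_def Len_def)

lemma tpar_Suc: "tpar p n (Suc k) = tpar p n k + dist (p k) (p (Suc k)) / Len p n"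
  by (simp add: tpar_def add_divide_distrib)

lemma tpar_diff:
  assumes "a \<le> b"
  shows "tpar p n b - tpar p n a = (\<Sum>l=a..<b. dist (p l) (p (Suc l))) / Len p n"
proof -
  have "(\<Sum>l<b. dist (p l) (p (Suc l)))
      = (\<Sum>l<a. dist (p l) (p (Suc l))) + (\<Sum>l=a..<b. dist (p l) (p (Suc l)))"
    using sum.atLeastLessThan_concat[of 0 a b "\<lambda>l. dist (p l) (p (Suc l))"] assms
    by (simp add: atLeast0LessThan)
  then show ?thesis
    by (simp add: tpar_def add_divide_distrib)
qed

lemma tpar_mono:
  assumes "a \<le> b"
  shows "tpar p n a \<le> tpar p n b"
proof -
  have "0 \<le> (\<Sum>l=a..<b. dist (p l) (p (Suc l))) / Len p n"
    by (simp add: sum_nonneg Len_nonneg)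
  then show ?thesis
    using tpar_diff[OF assms, of p n] by simp
qed

lemma dist_vertices_le_tpar:
  "Len p n > 0 \<Longrightarrow> a \<le> b \<Longrightarrow> dist (p a) (p b) \<le> Len p n * (tpar p n b - tpar p n a)"
  using dist_le_sum_edges[of a b p] by (simp add: tpar_diff)

lemma dist_edge_le_Mesh: "k < n \<Longrightarrow> dist (p k) (p (Suc k)) \<le> Mesh p n"
  unfolding Mesh_def by (rule Max_ge) auto

lemma pdiam_le_Len: "pdiam p n \<le> Len p n"
proof -
  have "dist (p k) (p l) \<le> Len p n" if "k \<le> l" "l \<le> n" for k l
  proof -
    have "dist (p k) (p l) \<le> (\<Sum>i=k..<l. dist (p i) (p (Suc i)))"
      using that(1) by (rule dist_le_sum_edges)
    also have "\<dots> \<le> (\<Sum>i<n. dist (p i) (p (Suc i)))"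
      using that by (intro sum_mono2) auto
    finally show ?thesis by (simp add: Len_def)
  qed
  then have "dist (p k) (p l) \<le> Len p n" if "k \<le> n" "l \<le> n" for k l
    using that by (metis dist_commute nle_le)
  moreover have "{dist (p k) (p l) | k l. k \<le> n \<and> l \<le> n}
      = (\<lambda>(k, l). dist (p k) (p l)) ` ({..n} \<times> {..n})"
    by auto
  ultimately show ?thesis
    unfolding pdiam_def by (subst Max_le_iff) auto
qed

definition edge_map :: "(nat \<Rightarrow> linf) \<Rightarrow> nat \<Rightarrow> nat \<Rightarrow> real \<Rightarrow> linf" where
  "edge_map p n k t =
     p k + ((t - tpar p n k) / (tpar p n (Suc k) - tpar p n k)) *\<^sub>R (p (Suc k) - p k)"

lemma edge_map_left [simp]: "edge_map p n k (tpar p n k) = p k"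
  by (simp add: edge_map_def)

lemma edge_map_right:
  "tpar p n k < tpar p n (Suc k) \<Longrightarrow> edge_map p n k (tpar p n (Suc k)) = p (Suc k)"
  by (simp add: edge_map_def)

lemma dist_edge_map:
  assumes "tpar p n k < tpar p n (Suc k)"
  shows "dist (edge_map p n k s) (edge_map p n k t) = Len p n * \<bar>s - t\<bar>"
proof -
  let ?D = "tpar p n (Suc k) - tpar p n k"
  have Len: "Len p n > 0"
    using assms Len_nonneg[of p n] by (cases "Len p n = 0") (auto simp: tpar_def)
  have "dist (edge_map p n k s) (edge_map p n k t) = \<bar>s - t\<bar> / ?D * dist (p k) (p (Suc k))"
    using assms by (simp add: edge_map_def dist_norm norm_minus_commute
        flip: scaleR_diff_left diff_divide_distrib)
  also have "\<dots> = Len p n * \<bar>s - t\<bar>"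
    using assms Len by (simp add: tpar_Suc field_simps)
  finally show ?thesis .
qed

lemma gammaP_on_edge:
  assumes Len: "Len p n > 0" and t: "0 \<le> t" "t \<le> 1"
  obtains k where "k < n" "tpar p n k \<le> t" "t \<le> tpar p n (Suc k)"
    "tpar p n k < tpar p n (Suc k)" "gammaP p n t = edge_map p n k t"
proof -
  let ?T = "tpar p n"
  let ?edge = "\<lambda>k. k < n \<and> ?T k \<le> t \<and> ?T k < ?T (Suc k)"
  define k where "k = (GREATEST k. ?edge k)"
  have "n \<noteq> 0"
    using Len by (cases n) (auto simp: Len_def)
  then obtain j where "j < n" "?T j \<le> 0" "?T j < ?T (Suc j)"
    using exists_increasing_step[of 0 n ?T] Len by (auto simp: tpar_last)
  then have "?edge j"
    using t by simp
  then have edge_k: "?edge k"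
    unfolding k_def by (rule GreatestI_nat[where b = n]) simp
  have k_max: "j \<le> k" if "?edge j" for j
    unfolding k_def using that by (rule Greatest_le_nat[where b = n]) simp
  have "t \<le> ?T (Suc k)"
  proof (rule ccontr)
    assume not_le: "\<not> t \<le> ?T (Suc k)"
    then have "?T (Suc k) < ?T n"
      using t tpar_last[OF Len] by simp
    then obtain j where "Suc k \<le> j" "j < n" "?T j \<le> ?T (Suc k)" "?T j < ?T (Suc j)"
      using exists_increasing_step[of "Suc k" n ?T] edge_k by auto
    then show False
      using k_max[of j] not_le by simp
  qed
  with edge_k Len show thesis
    by (intro that[of k]) (simp_all add: gammaP_def edge_map_def k_def Let_def)
qed

lemma dist_gammaP_le:
  assumes Len: "Len p n > 0" and st: "0 \<le> s" "s \<le> t" "t \<le> 1"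
  shows "dist (gammaP p n s) (gammaP p n t) \<le> Len p n * (t - s)"
proof -
  let ?T = "tpar p n"
  obtain a where a: "?T a \<le> s" "s \<le> ?T (Suc a)" "?T a < ?T (Suc a)"
    "gammaP p n s = edge_map p n a s"
    using gammaP_on_edge[OF Len, of s] st by auto
  obtain b where b: "?T b \<le> t" "t \<le> ?T (Suc b)" "?T b < ?T (Suc b)"
    "gammaP p n t = edge_map p n b t"
    using gammaP_on_edge[OF Len, of t] st by auto
  consider "b < a" | "a = b" | "a < b"
    by linarith
  then show ?thesis
  proof cases
    case 1
    then have "?T (Suc b) \<le> ?T a"
      by (simp add: tpar_mono)
    then have "s = t"
      using a b st by linarith
    then show ?thesis
      by simp
  next
    case 2
    then show ?thesis
      using a b dist_edge_map[OF a(3), of s t] st by simp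
  next
    case 3
    have "dist (edge_map p n a s) (p (Suc a)) = Len p n * \<bar>s - ?T (Suc a)\<bar>"
      using dist_edge_map[OF a(3), of s "?T (Suc a)"] unfolding edge_map_right[OF a(3)] .
    then have "dist (edge_map p n a s) (p (Suc a)) = Len p n * (?T (Suc a) - s)"
      using a(2) by (simp add: abs_if)
    moreover have "dist (p b) (edge_map p n b t) = Len p n * \<bar>?T b - t\<bar>"
      using dist_edge_map[OF b(3), of "?T b" t] unfolding edge_map_left .
    then have "dist (p b) (edge_map p n b t) = Len p n * (t - ?T b)"
      using b(1) by (simp add: abs_if)
    moreover have "dist (p (Suc a)) (p b) \<le> Len p n * (?T b - ?T (Suc a))"
      using 3 by (intro dist_vertices_le_tpar[OF Len]) simp
    moreover have "dist (gammaP p n s) (gammaP p n t)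
        \<le> dist (edge_map p n a s) (p (Suc a)) + dist (p (Suc a)) (p b)
          + dist (p b) (edge_map p n b t)"
      using a(4) b(4) dist_triangle[of "edge_map p n a s" "edge_map p n b t" "p (Suc a)"]
        dist_triangle[of "p (Suc a)" "edge_map p n b t" "p b"]
      by simp
    ultimately have "dist (gammaP p n s) (gammaP p n t)
        \<le> Len p n * (?T (Suc a) - s) + Len p n * (?T b - ?T (Suc a)) + Len p n * (t - ?T b)"
      by linarith
    also have "\<dots> = Len p n * (t - s)"
      by (simp add: algebra_simps)
    finally show ?thesis .
  qed
qed

lemma lipschitz_on_gammaP: "(Len p n)-lipschitz_on {0..1} (gammaP p n)"
proof (cases "Len p n = 0")
  case True
  then have "gammaP p n = (\<lambda>_. p 0)"
    by (simp add: gammaP_def fun_eq_iff)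
  then show ?thesis
    using True lipschitz_on_constant by simp
next
  case False
  then have Len: "Len p n > 0"
    using Len_nonneg[of p n] by simp
  show ?thesis
  proof (rule lipschitz_onI)
    fix s t :: real
    assume "s \<in> {0..1}" "t \<in> {0..1}"
    then show "dist (gammaP p n s) (gammaP p n t) \<le> Len p n * dist s t"
      using dist_gammaP_le[OF Len, of s t] dist_gammaP_le[OF Len, of t s]
      by (cases "s \<le> t") (auto simp: dist_real_def dist_commute)
  qed (rule Len_nonneg)
qed

lemma gammaP_near_vertex:
  assumes "0 < n" "0 \<le> t" "t \<le> 1"
  obtains k where "k < n" "dist (gammaP p n t) (p k) \<le> Mesh p n"
proof (cases "Len p n = 0")
  case True
  then have "dist (gammaP p n t) (p 0) \<le> Mesh p n"
    using order_trans[OF zero_le_dist dist_edge_le_Mesh[OF \<open>0 < n\<close>]]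
    by (simp add: gammaP_def)
  then show thesis
    using that \<open>0 < n\<close> by blast
next
  case False
  then have Len: "Len p n > 0"
    using Len_nonneg[of p n] by simp
  obtain k where k: "k < n" "tpar p n k \<le> t" "t \<le> tpar p n (Suc k)"
    "tpar p n k < tpar p n (Suc k)" "gammaP p n t = edge_map p n k t"
    using gammaP_on_edge[OF Len assms(2,3)] .
  have "dist (gammaP p n t) (p k) = Len p n * (t - tpar p n k)"
    using k dist_edge_map[OF k(4), of t "tpar p n k"] by simp
  also have "\<dots> \<le> Len p n * (tpar p n (Suc k) - tpar p n k)"
    using k Len by (intro mult_left_mono) auto
  also have "\<dots> = dist (p k) (p (Suc k))"
    using Len by (simp add: tpar_Suc)
  also have "\<dots> \<le> Mesh p n"
    using k(1) by (rule dist_edge_le_Mesh)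
  finally show thesis
    using k(1) that by blast
qed

section \<open>Tightness from the weighted length bound\<close>

lemma sum_le_weighted_sum_div:
  fixes h d :: "'a \<Rightarrow> real"
  assumes "finite B" "A \<subseteq> B" "0 < m"
    and "\<And>k. k \<in> A \<Longrightarrow> m \<le> h k" "\<And>k. k \<in> B \<Longrightarrow> 0 \<le> h k" "\<And>k. k \<in> B \<Longrightarrow> 0 \<le> d k"
    and "(\<Sum>k\<in>B. h k * d k) \<le> M"
  shows "(\<Sum>k\<in>A. d k) \<le> M / m"
proof -
  have "m * (\<Sum>k\<in>A. d k) \<le> (\<Sum>k\<in>A. h k * d k)"
    using assms by (auto simp: sum_distrib_left intro!: sum_mono mult_right_mono)
  also have "\<dots> \<le> (\<Sum>k\<in>B. h k * d k)"
    using assms by (intro sum_mono2) auto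
  finally show ?thesis
    using assms by (simp add: pos_le_divide_eq mult.commute)
qed

lemma infdist_vertex_le:
  fixes p :: "nat \<Rightarrow> linf" and h :: "nat \<Rightarrow> real"
  assumes "0 < m"
    and h_nonneg: "\<And>k. k < n \<Longrightarrow> 0 \<le> h k"
    and h_far: "\<And>k. k < n \<Longrightarrow> e \<le> infdist (p k) C \<Longrightarrow> m \<le> h k"
    and weighted: "(\<Sum>k<n. h k * dist (p k) (p (Suc k))) \<le> M"
    and long: "M / m < Len p n"
    and "k \<le> n"
  shows "infdist (p k) C \<le> e + Mesh p n + M / m"
proof -
  define near where "near j \<longleftrightarrow> j < n \<and> infdist (p j) C < e" for j
  have far_length: "(\<Sum>l\<in>A. dist (p l) (p (Suc l))) \<le> M / m"
    if "A \<subseteq> {..<n}" "\<forall>l\<in>A. \<not> near l" for A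
    using that
    by (intro sum_le_weighted_sum_div[OF _ _ \<open>0 < m\<close> _ _ _ weighted])
      (auto simp: near_def subset_iff not_less intro!: h_far h_nonneg)
  have far_run: "dist (p a) (p b) \<le> M / m" if "a \<le> b" "b \<le> n" "\<forall>l\<in>{a..<b}. \<not> near l" for a b
    using dist_le_sum_edges[OF \<open>a \<le> b\<close>, of p] far_length[of "{a..<b}"] that by force
  have "\<exists>j. near j"
  proof (rule ccontr)
    assume "\<nexists>j. near j"
    then have "Len p n \<le> M / m"
      using far_length[of "{..<n}"] by (simp add: Len_def)
    then show False
      using long by simp
  qed
  then have "0 < n"
    by (auto simp: near_def)
  then have "0 \<le> Mesh p n"
    using order_trans[OF zero_le_dist dist_edge_le_Mesh] by blast
  have "0 \<le> M / m"
    using far_run[of 0 0] by simp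
  obtain j where "near j" "dist (p j) (p k) \<le> Mesh p n + M / m"
  proof (cases "\<exists>j\<le>k. near j")
    case True
    define j where "j = (GREATEST j. j \<le> k \<and> near j)"
    have j: "j \<le> k" "near j"
      using True GreatestI_nat[where P = "\<lambda>j. j \<le> k \<and> near j" and b = k]
      unfolding j_def by blast+
    have after_j: "\<not> near l" if "l \<in> {Suc j..<k}" for l
      using that Greatest_le_nat[of "\<lambda>j. j \<le> k \<and> near j" l k] unfolding j_def by auto
    have "dist (p j) (p k) \<le> Mesh p n + M / m"
    proof (cases "j = k")
      case True
      then show ?thesis
        using \<open>0 \<le> Mesh p n\<close> \<open>0 \<le> M / m\<close> by simp
    next
      case False
      have "dist (p j) (p k) \<le> dist (p j) (p (Suc j)) + dist (p (Suc j)) (p k)"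
        by (rule dist_triangle)
      also have "\<dots> \<le> Mesh p n + M / m"
        using j False \<open>k \<le> n\<close> after_j
        by (intro add_mono dist_edge_le_Mesh far_run) (auto simp: near_def)
      finally show ?thesis .
    qed
    then show thesis
      using that j(2) by blast
  next
    case False
    define j where "j = (LEAST j. near j)"
    have "near j"
      unfolding j_def using \<open>\<exists>j. near j\<close> by (rule LeastI_ex)
    moreover have "k \<le> j"
      using False calculation by (meson nat_le_linear)
    moreover have "\<forall>l\<in>{k..<j}. \<not> near l"
      unfolding j_def by (auto dest: not_less_Least)
    ultimately have "dist (p k) (p j) \<le> M / m"
      by (intro far_run) (auto simp: near_def)
    then show thesis
      using that \<open>near j\<close> \<open>0 \<le> Mesh p n\<close> by (simp add: dist_commute)
  qed
  then show ?thesis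
    using infdist_triangle[of "p k" C "p j"] by (auto simp: near_def dist_commute)
qed

lemma real_le_hfun:
  assumes K_mono: "\<And>a b. a \<le> b \<Longrightarrow> K a \<subseteq> K b" and K_ne: "\<And>a. K a \<noteq> {}"
    and "m \<le> i" "1 \<le> real i * e" "e \<le> infdist x (K m)"
  shows "real m \<le> hfun K i x"
proof -
  have "min (real i * infdist x (K k)) 1 = 1" if "k \<le> m" for k
  proof -
    have "infdist x (K m) \<le> infdist x (K k)"
      using that K_mono K_ne by (intro infdist_mono) auto
    then have "real i * e \<le> real i * infdist x (K k)"
      using assms(5) by (intro mult_left_mono) auto
    then show ?thesis
      using assms(4) by simp
  qed
  then have "real m = (\<Sum>k=1..m. min (real i * infdist x (K k)) 1)"
    by simp
  also have "\<dots> \<le> hfun K i x"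
    unfolding hfun_def using assms(3) by (intro sum_mono2) (auto simp: infdist_nonneg)
  finally show ?thesis .
qed

lemma infdist_gammaP_le:
  fixes K :: "nat \<Rightarrow> linf set"
  assumes K_ne: "\<And>m. K m \<noteq> {}" and K_mono: "\<And>m m'. m \<le> m' \<Longrightarrow> K m \<subseteq> K m'"
    and "0 < n" "0 < m" "m \<le> i" "1 \<le> real i * e"
    and hbound: "(\<Sum>k<n. hfun K i (p k) * dist (p k) (p (Suc k))) \<le> M"
    and long: "M / m < Len p n" and "t \<in> {0..1}"
  shows "infdist (gammaP p n t) (K m) \<le> e + 2 * Mesh p n + M / m"
proof -
  obtain k where k: "k < n" "dist (gammaP p n t) (p k) \<le> Mesh p n"
    using gammaP_near_vertex[where p = p and n = n and t = t] \<open>0 < n\<close> \<open>t \<in> {0..1}\<close> by auto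
  have "infdist (p k) (K m) \<le> e + Mesh p n + M / m"
  proof (rule infdist_vertex_le[where h = "\<lambda>l. hfun K i (p l)"])
    show "0 \<le> hfun K i (p l)" for l
      by (simp add: hfun_def sum_nonneg infdist_nonneg)
    show "real m \<le> hfun K i (p l)" if "l < n" "e \<le> infdist (p l) (K m)" for l
      using \<open>m \<le> i\<close> \<open>1 \<le> real i * e\<close> that(2) by (intro real_le_hfun[OF K_mono K_ne]) auto
  qed (use \<open>0 < m\<close> hbound long k in auto)
  then show ?thesis
    using infdist_triangle[of "gammaP p n t" "K m" "p k"] k by linarith
qed

lemma asymptotically_tight_gammaP:
  fixes K :: "nat \<Rightarrow> linf set"
  assumes K_ne: "\<And>m. K m \<noteq> {}" and K_compact: "\<And>m. compact (K m)"
    and K_mono: "\<And>m m'. m \<le> m' \<Longrightarrow> K m \<subseteq> K m'"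
    and n_pos: "\<And>i. 0 < n i"
    and mesh: "(\<lambda>i. Mesh (p i) (n i)) \<longlonglongrightarrow> 0"
    and long: "\<And>i. \<Delta> \<le> Len (p i) (n i)" and "0 < \<Delta>"
    and hbound: "\<And>i. (\<Sum>k<n i. hfun K i (p i k) * dist (p i k) (p i (Suc k))) \<le> M"
  shows "asymptotically_tight {0..1} (\<lambda>i. gammaP (p i) (n i))"
  unfolding asymptotically_tight_def
proof (intro allI impI)
  fix \<epsilon> :: real
  assume "0 < \<epsilon>"
  \<comment> \<open>\<open>e \<le> \<Delta>\<close> makes all paths longer than \<open>M / m\<close>; \<open>4 * e \<le> \<epsilon>\<close> absorbs the error terms.\<close>
  define e where "e = min \<Delta> \<epsilon> / 4"
  have "0 < e" "e \<le> \<Delta>" "4 * e \<le> \<epsilon>"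
    using \<open>0 < \<Delta>\<close> \<open>0 < \<epsilon>\<close> by (auto simp: e_def)
  obtain m :: nat where "max 1 (M / e) < m"
    using reals_Archimedean2 by blast
  then have "0 < m" "M / m < e"
    using \<open>0 < e\<close> by (auto simp: divide_less_eq mult.commute)
  have "\<forall>\<^sub>F i in sequentially. m \<le> i \<and> 1 / e \<le> real i \<and> Mesh (p i) (n i) < e"
    using eventually_ge_at_top[of m] eventually_ge_at_top[of "nat \<lceil>1 / e\<rceil>"]
      order_tendstoD(2)[OF mesh \<open>0 < e\<close>]
    by eventually_elim linarith
  then have "\<forall>\<^sub>F i in sequentially. \<forall>t\<in>{0..1}. infdist (gammaP (p i) (n i) t) (K m) < \<epsilon>"
  proof eventually_elim
    case (elim i)
    have "1 \<le> real i * e"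
      using elim \<open>0 < e\<close> by (simp add: field_simps)
    moreover have "M / m < Len (p i) (n i)"
      using \<open>M / m < e\<close> \<open>e \<le> \<Delta>\<close> long[of i] by linarith
    ultimately have "infdist (gammaP (p i) (n i) t) (K m) \<le> e + 2 * Mesh (p i) (n i) + M / m"
      if "t \<in> {0..1}" for t
      using elim \<open>0 < m\<close> that by (intro infdist_gammaP_le[OF K_ne K_mono n_pos _ _ _ hbound]) auto
    then show ?case
      using elim \<open>M / m < e\<close> \<open>4 * e \<le> \<epsilon>\<close> by fastforce
  qed
  then show "\<exists>C. compact C \<and>
      (\<forall>\<^sub>F i in sequentially. \<forall>t\<in>{0..1}. \<exists>c\<in>C. dist (gammaP (p i) (n i) t) c < \<epsilon>)"
    using K_compact[of m]
    by (intro exI[of _ "K m"])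
      (auto simp: infdist_notempty cINF_less_iff K_ne elim!: eventually_mono)
qed

section \<open>The limit curve\<close>

lemma Cauchy_if_dist_tendsto_0:
  fixes f g :: "nat \<Rightarrow> 'a::metric_space"
  assumes "Cauchy f" and "(\<lambda>n. dist (f n) (g n)) \<longlonglongrightarrow> 0"
  shows "Cauchy g"
proof (rule metric_CauchyI)
  fix e :: real
  assume "0 < e"
  then obtain M1 where M1: "\<And>m n. M1 \<le> m \<Longrightarrow> M1 \<le> n \<Longrightarrow> dist (f m) (f n) < e / 3"
    using metric_CauchyD[OF \<open>Cauchy f\<close>, of "e / 3"] by auto
  obtain M2 where M2: "\<And>n. M2 \<le> n \<Longrightarrow> dist (f n) (g n) < e / 3"
    using order_tendstoD(2)[OF assms(2), of "e / 3"] \<open>0 < e\<close> by (auto simp: eventually_sequentially)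
  have "dist (g m) (g n) < e" if "max M1 M2 \<le> m" "max M1 M2 \<le> n" for m n
    using M1[of m n] M2[of m] M2[of n] that dist_triangle[of "g m" "g n" "f m"]
      dist_triangle[of "f m" "g n" "f n"] dist_commute[of "g m" "f m"]
    by simp
  then show "\<exists>M. \<forall>m\<ge>M. \<forall>n\<ge>M. dist (g m) (g n) < e"
    by blast
qed

lemma uniform_limit_if_uniformly_Cauchy:
  fixes f :: "nat \<Rightarrow> 'a \<Rightarrow> 'b::metric_space"
  assumes "uniformly_Cauchy_on S f" and lim: "\<And>t. t \<in> S \<Longrightarrow> (\<lambda>n. f n t) \<longlonglongrightarrow> g t"
  shows "uniform_limit S f g sequentially"
  unfolding uniform_limit_sequentially_iff
proof (intro allI impI)
  fix e :: real
  assume "0 < e"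
  then obtain N where N: "\<And>t m n. t \<in> S \<Longrightarrow> N \<le> m \<Longrightarrow> N \<le> n \<Longrightarrow> dist (f m t) (f n t) < e / 2"
    using \<open>uniformly_Cauchy_on S f\<close> unfolding uniformly_Cauchy_on_def
    by (meson half_gt_zero)
  have close: "dist (f n t) (g t) \<le> e / 2" if "t \<in> S" "N \<le> n" for n t
  proof (rule Lim_bounded)
    show "(\<lambda>m. dist (f n t) (f m t)) \<longlonglongrightarrow> dist (f n t) (g t)"
      using lim[OF \<open>t \<in> S\<close>] by (intro tendsto_intros)
    show "\<forall>m\<ge>N. dist (f n t) (f m t) \<le> e / 2"
      using N that by (simp add: less_imp_le)
  qed
  show "\<exists>N. \<forall>n\<ge>N. \<forall>t\<in>S. dist (f n t) (g t) < e"
  proof (intro exI[of _ N] allI impI ballI)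
    fix n t
    assume "N \<le> n" "t \<in> S"
    then show "dist (f n t) (g t) < e"
      using close[of t n] \<open>0 < e\<close> by linarith
  qed
qed

lemma gammaP_Cauchy_converges_in_complete:
  assumes "complete X" and p_in: "\<And>j k. k \<le> n j \<Longrightarrow> p j k \<in> X" and n_pos: "\<And>j. 0 < n j"
    and mesh: "(\<lambda>j. Mesh (p j) (n j)) \<longlonglongrightarrow> 0"
    and Cauchy: "Cauchy (\<lambda>j. gammaP (p j) (n j) t)" and "t \<in> {0..1}"
  obtains x where "x \<in> X" "(\<lambda>j. gammaP (p j) (n j) t) \<longlonglongrightarrow> x"
proof -
  have "\<exists>k. k < n j \<and> dist (gammaP (p j) (n j) t) (p j k) \<le> Mesh (p j) (n j)" for j
    using gammaP_near_vertex[where p = "p j" and n = "n j" and t = t] n_pos[of j] \<open>t \<in> {0..1}\<close>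
    by auto
  from choice[OF allI[OF this]] obtain k
    where k: "\<forall>j. k j < n j \<and> dist (gammaP (p j) (n j) t) (p j (k j)) \<le> Mesh (p j) (n j)"
    by (rule exE)
  have dist_0: "(\<lambda>j. dist (gammaP (p j) (n j) t) (p j (k j))) \<longlonglongrightarrow> 0"
    using k by (intro tendsto_sandwich[OF _ _ tendsto_const mesh]) auto
  have "\<forall>j. p j (k j) \<in> X"
  proof
    fix j
    show "p j (k j) \<in> X"
      using k p_in[of "k j" j] by (simp add: less_imp_le)
  qed
  moreover have "Cauchy (\<lambda>j. p j (k j))"
    using Cauchy dist_0 by (rule Cauchy_if_dist_tendsto_0)
  ultimately obtain x where x: "x \<in> X" and q_lim: "(\<lambda>j. p j (k j)) \<longlonglongrightarrow> x"
    by (rule completeE[OF \<open>complete X\<close>])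
  have "(\<lambda>j. gammaP (p j) (n j) t - p j (k j)) \<longlonglongrightarrow> 0"
    using dist_0 by (simp add: dist_norm tendsto_norm_zero_iff)
  then have "(\<lambda>j. gammaP (p j) (n j) t) \<longlonglongrightarrow> x"
    by (rule Lim_transform[OF q_lim])
  with x show thesis
    by (rule that)
qed

lemma gammaP_uniform_limit_in_complete:
  assumes "complete X" and "\<And>j k. k \<le> n j \<Longrightarrow> p j k \<in> X" and "\<And>j. 0 < n j"
    and "(\<lambda>j. Mesh (p j) (n j)) \<longlonglongrightarrow> 0"
    and Cauchy: "uniformly_Cauchy_on {0..1} (\<lambda>j. gammaP (p j) (n j))"
  obtains \<gamma> where "uniform_limit {0..1} (\<lambda>j. gammaP (p j) (n j)) \<gamma> sequentially" "\<gamma> ` {0..1} \<subseteq> X"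
proof -
  have "\<forall>t\<in>{0..1}. \<exists>x. x \<in> X \<and> (\<lambda>j. gammaP (p j) (n j) t) \<longlonglongrightarrow> x"
  proof
    fix t :: real
    assume t: "t \<in> {0..1}"
    obtain x where "x \<in> X" "(\<lambda>j. gammaP (p j) (n j) t) \<longlonglongrightarrow> x"
    proof (rule gammaP_Cauchy_converges_in_complete[OF assms(1-4)])
      show "Cauchy (\<lambda>j. gammaP (p j) (n j) t)"
        using Cauchy t by (rule uniformly_Cauchy_imp_Cauchy)
    qed (use t in auto)
    then show "\<exists>x. x \<in> X \<and> (\<lambda>j. gammaP (p j) (n j) t) \<longlonglongrightarrow> x"
      by blast
  qed
  from bchoice[OF this] obtain \<gamma>
    where \<gamma>: "\<forall>t\<in>{0..1}. \<gamma> t \<in> X \<and> (\<lambda>j. gammaP (p j) (n j) t) \<longlonglongrightarrow> \<gamma> t"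
    by (rule exE)
  have "uniform_limit {0..1} (\<lambda>j. gammaP (p j) (n j)) \<gamma> sequentially"
    using Cauchy by (rule uniform_limit_if_uniformly_Cauchy) (use \<gamma> in blast)
  moreover have "\<gamma> ` {0..1} \<subseteq> X"
    using \<gamma> by blast
  ultimately show thesis
    by (rule that)
qed

theorem lemma2p7:
  fixes X :: "linf set" and K :: "nat \<Rightarrow> linf set"
    and M L \<Delta> :: real
    and p :: "nat \<Rightarrow> nat \<Rightarrow> linf" and n :: "nat \<Rightarrow> nat"
  assumes X_complete: "complete X"
    and X_separable: "separable_space (top_of_set X)"
    and K_ne: "\<And>m. K m \<noteq> {}"
    and K_compact: "\<And>m. compact (K m)"
    and K_sub: "\<And>m. K m \<subseteq> X"
    and K_mono: "\<And>m m'. m \<le> m' \<Longrightarrow> K m \<subseteq> K m'"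
    and pos: "M > 0" "L > 0" "\<Delta> > 0"
    and n_pos: "\<And>i. n i \<ge> 1"
    and p_in: "\<And>i k. k \<le> n i \<Longrightarrow> p i k \<in> X"
    and mesh: "(\<lambda>i. Mesh (p i) (n i)) \<longlonglongrightarrow> 0"
    and len: "\<And>i. Len (p i) (n i) \<le> L"
    and diam: "\<And>i. pdiam (p i) (n i) \<ge> \<Delta>"
    and hbound: "\<And>i. (\<Sum>k<n i. hfun K i (p i k) * dist (p i k) (p i (Suc k))) \<le> M"
  shows "\<exists>r \<gamma>. strict_mono r \<and> continuous_on {0..1} \<gamma> \<and> \<gamma> ` {0..1} \<subseteq> X \<and>
           uniform_limit {0..1} (\<lambda>j. gammaP (p (r j)) (n (r j))) \<gamma> sequentially \<and>
           (\<lambda>j. Mesh (p (r j)) (n (r j))) \<longlonglongrightarrow> 0"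
proof -
  have n_gt0: "0 < n i" for i
    using n_pos[of i] by simp
  have lip: "L-lipschitz_on {0..1} (gammaP (p i) (n i))" for i
    using lipschitz_on_gammaP len by (rule lipschitz_on_le)
  have "\<Delta> \<le> Len (p i) (n i)" for i
    using diam[of i] pdiam_le_Len[of "p i" "n i"] by linarith
  then have "asymptotically_tight {0..1} (\<lambda>i. gammaP (p i) (n i))"
    using pos(3)
    by (intro asymptotically_tight_gammaP[OF K_ne K_compact K_mono n_gt0 mesh _ _ hbound])
  then obtain r
    where r: "strict_mono r" "uniformly_Cauchy_on {0..1} (\<lambda>j. gammaP (p (r j)) (n (r j)))"
    by (rule equi_lipschitz_tight_uniformly_Cauchy_subseq[OF compact_Icc lip])
  have mesh_r: "(\<lambda>j. Mesh (p (r j)) (n (r j))) \<longlonglongrightarrow> 0"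
    using LIMSEQ_subseq_LIMSEQ[OF mesh r(1)] by (simp add: o_def)
  obtain \<gamma> where \<gamma>: "uniform_limit {0..1} (\<lambda>j. gammaP (p (r j)) (n (r j))) \<gamma> sequentially"
    and "\<gamma> ` {0..1} \<subseteq> X"
    by (rule gammaP_uniform_limit_in_complete[where p = "\<lambda>j. p (r j)" and n = "\<lambda>j. n (r j)"])
      (use X_complete p_in n_gt0 mesh_r r(2) in auto)
  moreover have "continuous_on {0..1} \<gamma>"
  proof (rule uniform_limit_theorem[OF _ \<gamma>])
    show "\<forall>\<^sub>F j in sequentially. continuous_on {0..1} (gammaP (p (r j)) (n (r j)))"
      using lipschitz_on_continuous_on[OF lip] by simp
  qed simp
  ultimately show ?thesis
    using r(1) mesh_r by blast
qed

end
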